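(* Let $X$ be a vector lattice and let $l : X \to \mathbb{R}$ be an order bounded linear functional with positive part $l_+ \neq 0$ and negative part $l_- \neq 0$. Then $\ker(l)$ is a Grothendieck subspace of $X$ if and only if $l_+$ and $l_-$ are Riesz homomorphisms on $X$, which in turn holds if and only if $\ker(l)$ is a Riesz subspace of $X$.
   Context: For an order bounded functional $l$, $l_+ = l \vee 0$ and $l_- = (-l)\vee 0$ in the Riesz space of order bounded functionals, so $l = l_+ - l_-$. A Riesz homomorphism is a linear functional preserving finite lattice operations. A Riesz subspace is a linear subspace closed under finite lattice operations. A linear subspace $H$ of a vector lattice is called a Grothendieck subspace (or $G$-space) if for all $x, y \in H$ one has $x \vee y \vee 0 + x \wedge y \wedge 0 \in H$. *)

theory Defs
  imports Complex_Main
begin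

definition order_bounded :: "('a::{ordered_real_vector,lattice} \<Rightarrow> real) \<Rightarrow> bool" where
  "order_bounded l \<longleftrightarrow> linear l \<and>
     (\<forall>a b. \<exists>M. \<forall>x. a \<le> x \<and> x \<le> b \<longrightarrow> \<bar>l x\<bar> \<le> M)"

definition fun_le :: "('a::{ordered_real_vector,lattice} \<Rightarrow> real) \<Rightarrow> ('a \<Rightarrow> real) \<Rightarrow> bool" where
  "fun_le f g \<longleftrightarrow> (\<forall>x. 0 \<le> x \<longrightarrow> f x \<le> g x)"

definition ob_sup :: "('a::{ordered_real_vector,lattice} \<Rightarrow> real) \<Rightarrow> ('a \<Rightarrow> real) \<Rightarrow> ('a \<Rightarrow> real) \<Rightarrow> bool" where
  "ob_sup f g h \<longleftrightarrow> order_bounded h \<and> fun_le f h \<and> fun_le g h \<and>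
     (\<forall>k. order_bounded k \<and> fun_le f k \<and> fun_le g k \<longrightarrow> fun_le h k)"

definition pos_part :: "('a::{ordered_real_vector,lattice} \<Rightarrow> real) \<Rightarrow> ('a \<Rightarrow> real)" where
  "pos_part l = (THE h. ob_sup l (\<lambda>_. 0) h)"

definition neg_part :: "('a::{ordered_real_vector,lattice} \<Rightarrow> real) \<Rightarrow> ('a \<Rightarrow> real)" where
  "neg_part l = pos_part (\<lambda>x. - l x)"

definition riesz_hom :: "('a::{ordered_real_vector,lattice} \<Rightarrow> real) \<Rightarrow> bool" where
  "riesz_hom f \<longleftrightarrow> linear f \<and>
     (\<forall>x y. f (sup x y) = max (f x) (f y) \<and> f (inf x y) = min (f x) (f y))"

definition riesz_subspace :: "'a::{ordered_real_vector,lattice} set \<Rightarrow> bool" where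
  "riesz_subspace H \<longleftrightarrow> subspace H \<and> (\<forall>x\<in>H. \<forall>y\<in>H. sup x y \<in> H \<and> inf x y \<in> H)"

definition grothendieck_subspace :: "'a::{ordered_real_vector,lattice} set \<Rightarrow> bool" where
  "grothendieck_subspace H \<longleftrightarrow> subspace H \<and>
     (\<forall>x\<in>H. \<forall>y\<in>H. sup (sup x y) 0 + inf (inf x y) 0 \<in> H)"

end

theory Submission
  imports Defs "HOL-Library.Lattice_Algebras"
begin

text \<open>On the positive cone, \<open>l\<^sub>+\<close> is given by the Riesz--Kantorovich formula
  \<open>l\<^sub>+ x = sup {l y | 0 \<le> y \<le> x}\<close>, and \<open>l = l\<^sub>+ - l\<^sub>-\<close>. As \<open>l\<^sub>+\<close> and \<open>l\<^sub>-\<close> are nonzero,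
  \<open>l\<close> takes both signs on the cone, so \<open>ker l\<close> majorizes every vector, and a majorizing G-space
  is a Riesz subspace. If \<open>ker l\<close> is a Riesz subspace, \<open>l\<^sub>+\<close> and \<open>l\<^sub>-\<close> vanish on one of any
  two disjoint positive vectors, which makes these positive functionals Riesz homomorphisms.
  If they are Riesz homomorphisms, \<open>ker l = {x. l\<^sub>+ x = l\<^sub>- x}\<close> is a Riesz subspace, and
  Riesz subspaces are G-spaces.\<close>

text \<open>The sort \<open>{ordered_real_vector, lattice}\<close> is not below the class \<open>lattice_ab_group_add\<close>,
  so the lattice-ordered group identities are made available by interpretation.\<close>

interpretation vector_lattice: lattice_ab_group_add "(+)" "0::'a::{ordered_real_vector,lattice}"
    "(-)" uminus "(\<le>)" "(<)" inf sup
  by unfold_locales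

lemma sup_zero_diff_sup_neg_zero:
  fixes x :: "'a::{ordered_real_vector,lattice}"
  shows "sup x 0 - sup (- x) 0 = x"
proof -
  have "sup x 0 - sup (- x) 0 = sup x 0 + inf x 0"
    using vector_lattice.neg_inf_eq_sup[of x 0, symmetric] by simp
  also have "\<dots> = x + 0"
    by (rule vector_lattice.add_eq_inf_sup[symmetric])
  finally show ?thesis
    by simp
qed

lemma inf_sup_zero_sup_neg_zero_eq_0:
  fixes x :: "'a::{ordered_real_vector,lattice}"
  shows "inf (sup x 0) (sup (- x) 0) = 0"
proof -
  let ?n = "sup (- x) 0"
  have "sup x 0 = ?n + x"
    using sup_zero_diff_sup_neg_zero[of x] by (metis diff_add_cancel add.commute)
  then have "inf (sup x 0) ?n = inf (?n + x) (?n + 0)"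
    by simp
  also have "\<dots> = ?n + inf x 0"
    by (simp only: vector_lattice.add_inf_distrib_left)
  also have "\<dots> = 0"
    by (metis vector_lattice.neg_inf_eq_sup minus_zero left_minus)
  finally show ?thesis .
qed

lemma sup_eq_add_sup_diff_zero:
  fixes x y :: "'a::{ordered_real_vector,lattice}"
  shows "sup x y = y + sup (x - y) 0"
  by (simp add: vector_lattice.add_sup_distrib_left)

lemma inf_eq_add_diff_sup:
  fixes x y :: "'a::{ordered_real_vector,lattice}"
  shows "inf x y = x + y - sup x y"
  by (metis vector_lattice.add_eq_inf_sup add_diff_cancel_left')

lemma riesz_decomposition:
  fixes y x1 x2 :: "'a::{ordered_real_vector,lattice}"
  assumes "0 \<le> y" "y \<le> x1 + x2" "0 \<le> x1" "0 \<le> x2"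
  obtains y1 y2 where "y = y1 + y2" "0 \<le> y1" "y1 \<le> x1" "0 \<le> y2" "y2 \<le> x2"
proof -
  have rest: "y - inf y x1 = sup 0 (y - x1)"
    by (simp add: vector_lattice.diff_inf_eq_sup vector_lattice.add_sup_distrib_left)
  have "y - x1 \<le> x2"
    using assms(2) by (simp add: diff_le_eq add.commute)
  then have "y - inf y x1 \<le> x2"
    unfolding rest using assms(4) by simp
  moreover have "0 \<le> y - inf y x1"
    unfolding rest by simp
  moreover have "y = inf y x1 + (y - inf y x1)"
    by (metis add.commute diff_add_cancel)
  ultimately show thesis
    using assms by (intro that[of "inf y x1" "y - inf y x1"]) (simp_all add: le_infI1)
qed

lemma scaleR_inf_distrib:
  fixes x y :: "'a::{ordered_real_vector,lattice}"
  assumes "0 < c"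
  shows "c *\<^sub>R inf x y = inf (c *\<^sub>R x) (c *\<^sub>R y)"
proof (rule antisym)
  show "c *\<^sub>R inf x y \<le> inf (c *\<^sub>R x) (c *\<^sub>R y)"
    using assms by (intro inf_greatest scaleR_left_mono) auto
  have "(1 / c) *\<^sub>R inf (c *\<^sub>R x) (c *\<^sub>R y) \<le> inf x y"
    using assms scaleR_left_mono[OF inf_le1[of "c *\<^sub>R x" "c *\<^sub>R y"], of "1 / c"]
      scaleR_left_mono[OF inf_le2[of "c *\<^sub>R x" "c *\<^sub>R y"], of "1 / c"]
    by (intro inf_greatest) auto
  from scaleR_left_mono[OF this, of c] assms
  show "inf (c *\<^sub>R x) (c *\<^sub>R y) \<le> c *\<^sub>R inf x y"
    by simp
qed

lemma inf_scaleR_eq_0: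
  fixes u v :: "'a::{ordered_real_vector,lattice}"
  assumes "0 \<le> u" "0 \<le> v" "inf u v = 0" "0 < a" "0 < b"
  shows "inf (a *\<^sub>R u) (b *\<^sub>R v) = 0"
proof (rule antisym)
  let ?c = "max a b"
  have "inf (a *\<^sub>R u) (b *\<^sub>R v) \<le> inf (?c *\<^sub>R u) (?c *\<^sub>R v)"
    using assms by (intro inf_mono scaleR_right_mono) auto
  also have "\<dots> = 0"
    using scaleR_inf_distrib[of ?c u v] assms by simp
  finally show "inf (a *\<^sub>R u) (b *\<^sub>R v) \<le> 0" .
  show "0 \<le> inf (a *\<^sub>R u) (b *\<^sub>R v)"
    using assms by (simp add: scaleR_nonneg_nonneg)
qed

lemma sup_diff_zero_eq_if_inf_eq_0:
  fixes u v :: "'a::{ordered_real_vector,lattice}"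
  assumes "inf u v = 0"
  shows "sup (u - v) 0 = u"
proof -
  have "sup (u - v) 0 = u + sup (- v) (- u)"
    by (simp add: vector_lattice.add_sup_distrib_left)
  also have "\<dots> = u"
    using assms vector_lattice.neg_inf_eq_sup[of v u] by (simp add: inf_commute)
  finally show ?thesis .
qed

lemma linear_if_order_bounded: "order_bounded l \<Longrightarrow> linear l"
  by (simp add: order_bounded_def)

lemma order_bounded_uminus: "order_bounded l \<Longrightarrow> order_bounded (\<lambda>x. - l x)"
  unfolding order_bounded_def by (auto simp: linear_compose_neg)

lemma linear_eq_if_eq_on_cone:
  fixes f g :: "'a::{ordered_real_vector,lattice} \<Rightarrow> real"
  assumes "linear f" "linear g" "\<And>x. 0 \<le> x \<Longrightarrow> f x = g x"
  shows "f = g"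
proof
  fix x :: 'a
  have "f x = f (sup x 0) - f (sup (- x) 0)"
    using sup_zero_diff_sup_neg_zero[of x] linear_diff[OF assms(1)] by metis
  also have "\<dots> = g (sup x 0) - g (sup (- x) 0)"
    by (simp add: assms(3))
  also have "\<dots> = g x"
    using sup_zero_diff_sup_neg_zero[of x] linear_diff[OF assms(2)] by metis
  finally show "f x = g x" .
qed

lemma ob_sup_unique:
  assumes "ob_sup f g h" "ob_sup f g h'"
  shows "h = h'"
proof (rule linear_eq_if_eq_on_cone)
  show "linear h" "linear h'"
    using assms by (simp_all add: ob_sup_def order_bounded_def)
  have "fun_le h h'" "fun_le h' h"
    using assms by (simp_all add: ob_sup_def)
  then show "h x = h' x" if "0 \<le> x" for x
    using that by (simp add: fun_le_def order_antisym)
qed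

lemma pos_part_eqI: "ob_sup l (\<lambda>_. 0) h \<Longrightarrow> pos_part l = h"
  unfolding pos_part_def by (rule the_equality) (auto intro: ob_sup_unique)

lemma exists_pos_if_pos_part_nonzero:
  assumes "pos_part l \<noteq> (\<lambda>_. 0)"
  obtains w where "0 \<le> w" "0 < l w"
proof (rule ccontr)
  assume "\<not> thesis"
  with that have "ob_sup l (\<lambda>_. 0) (\<lambda>_. 0)"
    by (force simp: ob_sup_def fun_le_def order_bounded_def linear_zero)
  with assms show False
    by (simp add: pos_part_eqI)
qed

subsection \<open>Extension of additive functions from the positive cone\<close>

definition cone_extension :: "('a::{ordered_real_vector,lattice} \<Rightarrow> real) \<Rightarrow> 'a \<Rightarrow> real" where
  "cone_extension f x = f (sup x 0) - f (sup (- x) 0)"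

context
  fixes f :: "'a::{ordered_real_vector,lattice} \<Rightarrow> real"
  assumes additive: "\<And>a b. 0 \<le> a \<Longrightarrow> 0 \<le> b \<Longrightarrow> f (a + b) = f a + f b"
begin

lemma cone_extension_diff:
  assumes "0 \<le> a" "0 \<le> b"
  shows "cone_extension f (a - b) = f a - f b"
proof -
  let ?p = "sup (a - b) 0" and ?n = "sup (- (a - b)) 0"
  have "?p + b = a + ?n"
    using sup_zero_diff_sup_neg_zero[of "a - b"] by (metis diff_add_eq diff_eq_eq)
  then have "f (?p + b) = f (a + ?n)"
    by (rule arg_cong)
  then have "f ?p + f b = f a + f ?n"
    using assms by (simp add: additive)
  then show ?thesis
    unfolding cone_extension_def by simp
qed

lemma cone_extension_eq: "0 \<le> x \<Longrightarrow> cone_extension f x = f x"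
  using cone_extension_diff[of x 0] additive[of 0 0] by simp

lemma linear_cone_extension:
  assumes homogeneous: "\<And>c x. 0 \<le> c \<Longrightarrow> 0 \<le> x \<Longrightarrow> f (c *\<^sub>R x) = c * f x"
  shows "linear (cone_extension f)"
proof (rule linearI)
  fix x y :: 'a
  let ?xp = "sup x 0" and ?xn = "sup (- x) 0" and ?yp = "sup y 0" and ?yn = "sup (- y) 0"
  have "x + y = (?xp + ?yp) - (?xn + ?yn)"
    by (simp only: add_diff_add sup_zero_diff_sup_neg_zero)
  then have "cone_extension f (x + y) = f (?xp + ?yp) - f (?xn + ?yn)"
    by (simp add: cone_extension_diff)
  then show "cone_extension f (x + y) = cone_extension f x + cone_extension f y"
    by (simp add: additive cone_extension_def)
next
  fix c :: real and x :: 'a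
  let ?xp = "sup x 0" and ?xn = "sup (- x) 0"
  have x: "c *\<^sub>R x = c *\<^sub>R ?xp - c *\<^sub>R ?xn"
    by (simp only: sup_zero_diff_sup_neg_zero flip: scaleR_right_diff_distrib)
  show "cone_extension f (c *\<^sub>R x) = c *\<^sub>R cone_extension f x"
  proof (cases "0 \<le> c")
    case True
    have "cone_extension f (c *\<^sub>R x) = f (c *\<^sub>R ?xp) - f (c *\<^sub>R ?xn)"
      unfolding x using True by (intro cone_extension_diff scaleR_nonneg_nonneg) auto
    then show ?thesis
      using True by (simp add: homogeneous cone_extension_def right_diff_distrib)
  next
    case False
    have x': "c *\<^sub>R x = (- c) *\<^sub>R ?xn - (- c) *\<^sub>R ?xp"
      unfolding x by simp
    have "cone_extension f (c *\<^sub>R x) = f ((- c) *\<^sub>R ?xn) - f ((- c) *\<^sub>R ?xp)"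
      unfolding x' using False by (intro cone_extension_diff scaleR_nonneg_nonneg) auto
    then show ?thesis
      using False homogeneous[of "- c", OF _ sup_ge2]
      by (simp add: cone_extension_def algebra_simps)
  qed
qed

end

subsection \<open>The Riesz--Kantorovich formula\<close>

definition riesz_kantorovich :: "('a::{ordered_real_vector,lattice} \<Rightarrow> real) \<Rightarrow> 'a \<Rightarrow> real" where
  "riesz_kantorovich l x = Sup (l ` {0..x})"

context
  fixes l :: "'a::{ordered_real_vector,lattice} \<Rightarrow> real"
  assumes order_bounded: "order_bounded l"
begin

lemma riesz_kantorovich_upper: "0 \<le> y \<Longrightarrow> y \<le> x \<Longrightarrow> l y \<le> riesz_kantorovich l x"
proof -
  obtain M where "\<forall>y. 0 \<le> y \<and> y \<le> x \<longrightarrow> \<bar>l y\<bar> \<le> M"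
    using order_bounded unfolding order_bounded_def by blast
  then have "bdd_above (l ` {0..x})"
    by (intro bdd_aboveI[where M = M]) (auto simp: abs_le_iff)
  then show "0 \<le> y \<Longrightarrow> y \<le> x \<Longrightarrow> ?thesis"
    unfolding riesz_kantorovich_def by (intro cSup_upper) auto
qed

lemma riesz_kantorovich_least:
  "0 \<le> x \<Longrightarrow> (\<And>y. 0 \<le> y \<Longrightarrow> y \<le> x \<Longrightarrow> l y \<le> M) \<Longrightarrow> riesz_kantorovich l x \<le> M"
  unfolding riesz_kantorovich_def by (rule cSup_least) auto

lemma riesz_kantorovich_nonneg: "0 \<le> x \<Longrightarrow> 0 \<le> riesz_kantorovich l x"
  using riesz_kantorovich_upper[of 0 x] linear_0[OF linear_if_order_bounded[OF order_bounded]]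
  by simp

lemma exists_pos_if_riesz_kantorovich_pos:
  assumes "0 \<le> x" "0 < riesz_kantorovich l x"
  obtains y where "0 \<le> y" "y \<le> x" "0 < l y"
  using assms less_cSupD[of "l ` {0..x}" 0] unfolding riesz_kantorovich_def by fastforce

lemma riesz_kantorovich_add:
  assumes a: "0 \<le> a" and b: "0 \<le> b"
  shows "riesz_kantorovich l (a + b) = riesz_kantorovich l a + riesz_kantorovich l b"
proof (rule antisym)
  show "riesz_kantorovich l (a + b) \<le> riesz_kantorovich l a + riesz_kantorovich l b"
  proof (rule riesz_kantorovich_least)
    show "0 \<le> a + b"
      using a b by simp
    fix y assume "0 \<le> y" "y \<le> a + b"
    then obtain y1 y2 where y: "y = y1 + y2" "0 \<le> y1" "y1 \<le> a" "0 \<le> y2" "y2 \<le> b"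
      using a b by (rule riesz_decomposition)
    have "l y = l y1 + l y2"
      using y linear_add[OF linear_if_order_bounded[OF order_bounded]] by simp
    also have "\<dots> \<le> riesz_kantorovich l a + riesz_kantorovich l b"
      using y by (intro add_mono riesz_kantorovich_upper)
    finally show "l y \<le> riesz_kantorovich l a + riesz_kantorovich l b" .
  qed
  have "l y1 + l y2 \<le> riesz_kantorovich l (a + b)"
    if "0 \<le> y1" "y1 \<le> a" "0 \<le> y2" "y2 \<le> b" for y1 y2
    using that linear_add[OF linear_if_order_bounded[OF order_bounded], of y1 y2]
      riesz_kantorovich_upper[of "y1 + y2" "a + b"] by (simp add: add_mono)
  then have "riesz_kantorovich l a \<le> riesz_kantorovich l (a + b) - l y2"
    if "0 \<le> y2" "y2 \<le> b" for y2
    using that by (intro riesz_kantorovich_least[OF a]) (simp add: algebra_simps)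
  then have "riesz_kantorovich l b \<le> riesz_kantorovich l (a + b) - riesz_kantorovich l a"
    by (intro riesz_kantorovich_least[OF b]) (simp add: algebra_simps)
  then show "riesz_kantorovich l a + riesz_kantorovich l b \<le> riesz_kantorovich l (a + b)"
    by simp
qed

lemma riesz_kantorovich_scaleR_le:
  assumes "0 \<le> x" "0 < c"
  shows "riesz_kantorovich l (c *\<^sub>R x) \<le> c * riesz_kantorovich l x"
proof (rule riesz_kantorovich_least)
  show "0 \<le> c *\<^sub>R x"
    using assms by (simp add: scaleR_nonneg_nonneg)
  fix y assume y: "0 \<le> y" "y \<le> c *\<^sub>R x"
  have "(1 / c) *\<^sub>R y \<le> x"
    using scaleR_left_mono[OF y(2), of "1 / c"] assms by simp
  then have "l ((1 / c) *\<^sub>R y) \<le> riesz_kantorovich l x"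
    using y assms by (intro riesz_kantorovich_upper) (auto simp: scaleR_nonneg_nonneg)
  then show "l y \<le> c * riesz_kantorovich l x"
    using assms linear_scale[OF linear_if_order_bounded[OF order_bounded]] by (simp add: field_simps)
qed

lemma riesz_kantorovich_scaleR:
  assumes "0 \<le> x" "0 \<le> c"
  shows "riesz_kantorovich l (c *\<^sub>R x) = c * riesz_kantorovich l x"
proof (cases "c = 0")
  case True
  then show ?thesis
    using riesz_kantorovich_nonneg[of 0] riesz_kantorovich_least[of 0 0]
      linear_0[OF linear_if_order_bounded[OF order_bounded]] by (force intro: antisym)
next
  case False
  with assms have c: "0 < c" by simp
  have "riesz_kantorovich l x = riesz_kantorovich l ((1 / c) *\<^sub>R (c *\<^sub>R x))"
    using c by simp
  also have "\<dots> \<le> (1 / c) * riesz_kantorovich l (c *\<^sub>R x)"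
    using c assms by (intro riesz_kantorovich_scaleR_le) (auto simp: scaleR_nonneg_nonneg)
  finally have "c * riesz_kantorovich l x \<le> riesz_kantorovich l (c *\<^sub>R x)"
    using c by (simp add: field_simps)
  with riesz_kantorovich_scaleR_le[OF assms(1) c] show ?thesis
    by simp
qed

lemma ob_sup_cone_extension_riesz_kantorovich:
  "ob_sup l (\<lambda>_. 0) (cone_extension (riesz_kantorovich l))"
proof -
  let ?P = "cone_extension (riesz_kantorovich l)"
  have lin: "linear ?P"
    by (intro linear_cone_extension riesz_kantorovich_add riesz_kantorovich_scaleR)
  have cone: "0 \<le> x \<Longrightarrow> ?P x = riesz_kantorovich l x" for x
    by (intro cone_extension_eq riesz_kantorovich_add)
  have mono: "?P x \<le> ?P y" if "x \<le> y" for x y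
    using that linear_diff[OF lin, of y x] cone[of "y - x"] riesz_kantorovich_nonneg[of "y - x"]
    by simp
  have "order_bounded ?P"
    unfolding order_bounded_def
  proof (intro conjI lin allI)
    fix a b :: 'a
    show "\<exists>M. \<forall>x. a \<le> x \<and> x \<le> b \<longrightarrow> \<bar>?P x\<bar> \<le> M"
      by (rule exI[of _ "\<bar>?P a\<bar> + \<bar>?P b\<bar>"]) (auto dest!: mono simp: abs_le_iff)
  qed
  moreover have "fun_le ?P k" if "order_bounded k" "fun_le l k" "fun_le (\<lambda>_. 0) k" for k
  proof -
    have "l y \<le> k x" if "0 \<le> y" "y \<le> x" for x y
    proof -
      have "l y \<le> k y" "0 \<le> k (x - y)"
        using \<open>fun_le l k\<close> \<open>fun_le (\<lambda>_. 0) k\<close> that by (simp_all add: fun_le_def)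
      moreover have "k (x - y) = k x - k y"
        using linear_if_order_bounded[OF \<open>order_bounded k\<close>] by (rule linear_diff)
      ultimately show ?thesis
        by linarith
    qed
    then show ?thesis
      unfolding fun_le_def by (auto simp: cone intro: riesz_kantorovich_least)
  qed
  ultimately show ?thesis
    unfolding ob_sup_def fun_le_def
    by (auto simp: cone intro: riesz_kantorovich_upper riesz_kantorovich_nonneg)
qed

lemma pos_part_eq_cone_extension: "pos_part l = cone_extension (riesz_kantorovich l)"
  by (rule pos_part_eqI[OF ob_sup_cone_extension_riesz_kantorovich])

lemma ob_sup_pos_part: "ob_sup l (\<lambda>_. 0) (pos_part l)"
  unfolding pos_part_eq_cone_extension by (rule ob_sup_cone_extension_riesz_kantorovich)

lemma pos_part_eq_riesz_kantorovich: "0 \<le> x \<Longrightarrow> pos_part l x = riesz_kantorovich l x"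
  by (simp add: pos_part_eq_cone_extension cone_extension_eq riesz_kantorovich_add)

end

lemma riesz_kantorovich_uminus:
  assumes ob: "order_bounded l" and "0 \<le> x"
  shows "riesz_kantorovich (\<lambda>y. - l y) x = riesz_kantorovich l x - l x"
proof (rule antisym)
  have lin: "linear l"
    using ob by (rule linear_if_order_bounded)
  have "- l y \<le> riesz_kantorovich l x - l x" if "0 \<le> y" "y \<le> x" for y
    using that riesz_kantorovich_upper[OF ob, of "x - y" x] linear_diff[OF lin, of x y]
    by simp
  then show "riesz_kantorovich (\<lambda>y. - l y) x \<le> riesz_kantorovich l x - l x"
    using assms by (intro riesz_kantorovich_least[OF order_bounded_uminus[OF ob]]) auto
  have "l y \<le> l x + riesz_kantorovich (\<lambda>y. - l y) x" if "0 \<le> y" "y \<le> x" for y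
    using that linear_diff[OF lin, of x y]
      riesz_kantorovich_upper[OF order_bounded_uminus[OF ob], of "x - y" x]
    by simp
  then have "riesz_kantorovich l x \<le> l x + riesz_kantorovich (\<lambda>y. - l y) x"
    using assms by (intro riesz_kantorovich_least[OF ob])
  then show "riesz_kantorovich l x - l x \<le> riesz_kantorovich (\<lambda>y. - l y) x"
    by simp
qed

lemma pos_part_diff_neg_part:
  assumes ob: "order_bounded l"
  shows "pos_part l x - neg_part l x = l x"
proof -
  have "linear (pos_part l)" "linear (neg_part l)"
    using ob_sup_pos_part[OF ob] ob_sup_pos_part[OF order_bounded_uminus[OF ob]]
    by (simp_all add: neg_part_def ob_sup_def order_bounded_def)
  then have "(\<lambda>x. pos_part l x - neg_part l x) = l"
    using ob order_bounded_uminus[OF ob]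
    by (intro linear_eq_if_eq_on_cone linear_compose_sub)
      (simp_all add: order_bounded_def neg_part_def pos_part_eq_riesz_kantorovich
        riesz_kantorovich_uminus)
  then show ?thesis
    by metis
qed

lemma exists_pos_below_if_pos_part_pos:
  assumes "order_bounded l" "0 \<le> x" "0 < pos_part l x"
  obtains y where "0 \<le> y" "y \<le> x" "0 < l y"
  using assms exists_pos_if_riesz_kantorovich_pos pos_part_eq_riesz_kantorovich by metis

subsection \<open>Riesz homomorphisms and Riesz subspaces\<close>

text \<open>As \<open>x \<squnion> 0\<close> and \<open>(- x) \<squnion> 0\<close> are disjoint, \<open>P\<close> sends one of them to \<open>0\<close>, whence
  \<open>P (x \<squnion> 0) = max (P x) 0\<close>.\<close>

lemma riesz_homI:
  fixes P :: "'a::{ordered_real_vector,lattice} \<Rightarrow> real"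
  assumes lin: "linear P" and pos: "\<And>x. 0 \<le> x \<Longrightarrow> 0 \<le> P x"
    and disj: "\<And>u v. 0 \<le> u \<Longrightarrow> 0 \<le> v \<Longrightarrow> inf u v = 0 \<Longrightarrow> P u = 0 \<or> P v = 0"
  shows "riesz_hom P"
proof -
  have sup_zero: "P (sup z 0) = max (P z) 0" for z
  proof -
    have "P z = P (sup z 0) - P (sup (- z) 0)"
      using sup_zero_diff_sup_neg_zero[of z] linear_diff[OF lin] by metis
    moreover have "P (sup z 0) = 0 \<or> P (sup (- z) 0) = 0"
      using disj inf_sup_zero_sup_neg_zero_eq_0[of z] by simp
    moreover have "0 \<le> P (sup z 0)" "0 \<le> P (sup (- z) 0)"
      by (simp_all add: pos)
    ultimately show ?thesis
      by linarith
  qed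
  have sup: "P (sup x y) = max (P x) (P y)" for x y
    unfolding sup_eq_add_sup_diff_zero[of x y]
    by (simp add: linear_add[OF lin] linear_diff[OF lin] sup_zero)
  have "P (inf x y) = min (P x) (P y)" for x y
  proof -
    have "P (inf x y) = P x + P y - P (sup x y)"
      using inf_eq_add_diff_sup[of x y] lin by (metis linear_add linear_diff)
    then show ?thesis
      by (simp add: sup min_def max_def)
  qed
  with lin sup show ?thesis
    unfolding riesz_hom_def by simp
qed

lemma riesz_subspaceI:
  assumes "subspace H" "\<And>x. x \<in> H \<Longrightarrow> sup x 0 \<in> H"
  shows "riesz_subspace H"
  unfolding riesz_subspace_def
proof (intro conjI ballI assms(1))
  fix x y assume "x \<in> H" "y \<in> H"
  then show "sup x y \<in> H"
    unfolding sup_eq_add_sup_diff_zero[of x y]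
    by (intro subspace_add subspace_diff assms)
  with \<open>x \<in> H\<close> \<open>y \<in> H\<close> show "inf x y \<in> H"
    unfolding inf_eq_add_diff_sup[of x y]
    by (intro subspace_add subspace_diff assms(1))
qed

lemma grothendieck_subspace_if_riesz_subspace:
  assumes "riesz_subspace H"
  shows "grothendieck_subspace H"
  using assms subspace_0[of H] subspace_add[of H]
  unfolding grothendieck_subspace_def riesz_subspace_def by simp

text \<open>For \<open>y \<ge> x, 0\<close> the G-space condition reads \<open>y + x \<sqinter> 0 \<in> H\<close>.\<close>

lemma riesz_subspace_if_majorizing_grothendieck_subspace:
  assumes G: "grothendieck_subspace H" and majorizing: "\<And>x. \<exists>y\<in>H. x \<le> y"
  shows "riesz_subspace H"
proof (rule riesz_subspaceI)
  show H: "subspace H"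
    using G by (simp add: grothendieck_subspace_def)
  fix x assume "x \<in> H"
  obtain y where "y \<in> H" "sup x 0 \<le> y"
    using majorizing by blast
  then have "x \<le> y" "0 \<le> y"
    by (auto intro: order_trans)
  then have "sup (sup x y) 0 + inf (inf x y) 0 = y + inf x 0"
    by (simp add: sup_absorb1 sup_absorb2 inf_absorb1)
  then have "y + inf x 0 \<in> H"
    using G \<open>x \<in> H\<close> \<open>y \<in> H\<close> unfolding grothendieck_subspace_def by metis
  then have "inf x 0 \<in> H"
    using subspace_diff[OF H _ \<open>y \<in> H\<close>] by force
  then show "sup x 0 \<in> H"
    using inf_eq_add_diff_sup[of x 0] subspace_diff[OF H \<open>x \<in> H\<close>] by force
qed

lemma exists_kernel_above:
  fixes l :: "'a::{ordered_real_vector,lattice} \<Rightarrow> real"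
  assumes "linear l" "0 \<le> w" "l w < 0" "0 \<le> l x"
  shows "\<exists>y. l y = 0 \<and> x \<le> y"
proof (intro exI conjI)
  let ?s = "l x / - l w"
  show "l (x + ?s *\<^sub>R w) = 0"
    using assms by (simp add: linear_add linear_diff linear_scale)
  have "0 \<le> ?s *\<^sub>R w"
    using assms by (intro scaleR_nonneg_nonneg divide_nonneg_pos) auto
  then show "x \<le> x + ?s *\<^sub>R w"
    by (rule le_add_same_cancel1[THEN iffD2])
qed

lemma kernel_majorizing:
  fixes l :: "'a::{ordered_real_vector,lattice} \<Rightarrow> real"
  assumes "linear l" "0 \<le> w_pos" "0 < l w_pos" "0 \<le> w_neg" "l w_neg < 0"
  shows "\<exists>y\<in>{x. l x = 0}. x \<le> y"
proof (cases "0 \<le> l x")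
  case True
  then show ?thesis
    using exists_kernel_above[of l w_neg x] assms by auto
next
  case False
  then show ?thesis
    using exists_kernel_above[of "\<lambda>x. - l x" w_pos x] assms by (auto simp: linear_compose_neg)
qed

text \<open>If \<open>u \<sqinter> v = 0\<close>, \<open>0 \<le> u' \<le> u\<close>, \<open>0 \<le> v' \<le> v\<close> and \<open>l u', l v' > 0\<close>, then
  \<open>x = l v' \<cdot> u' - l u' \<cdot> v'\<close> lies in the kernel while \<open>l (x \<squnion> 0) = l v' \<cdot> l u' > 0\<close>,
  so \<open>l\<^sub>+ u\<close> and \<open>l\<^sub>+ v\<close> cannot both be positive.\<close>

lemma riesz_hom_pos_part_if_riesz_subspace_kernel:
  assumes ob: "order_bounded l" and R: "riesz_subspace {x. l x = 0}"
  shows "riesz_hom (pos_part l)"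
proof (rule riesz_homI)
  have sup: "ob_sup l (\<lambda>_. 0) (pos_part l)"
    by (rule ob_sup_pos_part[OF ob])
  then show "linear (pos_part l)"
    by (simp add: ob_sup_def order_bounded_def)
  show "0 \<le> pos_part l x" if "0 \<le> x" for x
    using sup that by (simp add: ob_sup_def fun_le_def)
  have lin: "linear l"
    using ob by (rule linear_if_order_bounded)
  fix u v :: 'a assume u: "0 \<le> u" and v: "0 \<le> v" and uv: "inf u v = 0"
  show "pos_part l u = 0 \<or> pos_part l v = 0"
  proof (rule ccontr)
    assume "\<not> ?thesis"
    then have "0 < pos_part l u" "0 < pos_part l v"
      using u v sup by (auto simp: ob_sup_def fun_le_def order.order_iff_strict)
    then obtain u' v' where u': "0 \<le> u'" "u' \<le> u" "0 < l u'"
      and v': "0 \<le> v'" "v' \<le> v" "0 < l v'"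
      using exists_pos_below_if_pos_part_pos[OF ob] u v by metis
    have "inf u' v' = 0"
      using inf_mono[OF u'(2) v'(2)] u'(1) v'(1) uv by (simp add: order.antisym)
    then have "inf (l v' *\<^sub>R u') (l u' *\<^sub>R v') = 0"
      using u' v' by (intro inf_scaleR_eq_0) auto
    then have "sup (l v' *\<^sub>R u' - l u' *\<^sub>R v') 0 = l v' *\<^sub>R u'"
      by (rule sup_diff_zero_eq_if_inf_eq_0)
    moreover have "l (l v' *\<^sub>R u' - l u' *\<^sub>R v') = 0"
      using lin by (simp add: linear_diff linear_scale)
    then have "sup (l v' *\<^sub>R u' - l u' *\<^sub>R v') 0 \<in> {x. l x = 0}"
      using R linear_0[OF lin] by (simp add: riesz_subspace_def)
    ultimately show False
      using u' v' lin by (simp add: linear_scale)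
  qed
qed

lemma riesz_subspace_kernel_if_riesz_hom_parts:
  assumes "order_bounded l" "riesz_hom (pos_part l)" "riesz_hom (neg_part l)"
  shows "riesz_subspace {x. l x = 0}"
proof (rule riesz_subspaceI)
  show "subspace {x. l x = 0}"
    using linear_if_order_bounded[OF assms(1)] by (rule linear_subspace_kernel)
  have kernel: "l x = 0 \<longleftrightarrow> pos_part l x = neg_part l x" for x
    using pos_part_diff_neg_part[OF assms(1), of x] by linarith
  have "pos_part l 0 = 0" "neg_part l 0 = 0"
    using assms(2,3) by (simp_all add: riesz_hom_def linear_0)
  then show "sup x 0 \<in> {x. l x = 0}" if "x \<in> {x. l x = 0}" for x
    using that assms(2,3) kernel[of x] kernel[of "sup x 0"]
    by (simp add: riesz_hom_def)
qed

theorem lemma2: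
  fixes l :: "'a::{ordered_real_vector,lattice} \<Rightarrow> real"
  assumes "order_bounded l"
    and "pos_part l \<noteq> (\<lambda>_. 0)"
    and "neg_part l \<noteq> (\<lambda>_. 0)"
  shows "(grothendieck_subspace {x. l x = 0} \<longleftrightarrow> riesz_hom (pos_part l) \<and> riesz_hom (neg_part l))
       \<and> (riesz_hom (pos_part l) \<and> riesz_hom (neg_part l) \<longleftrightarrow> riesz_subspace {x. l x = 0})"
proof -
  obtain w_pos where "0 \<le> w_pos" "0 < l w_pos"
    using exists_pos_if_pos_part_nonzero[OF assms(2)] .
  moreover obtain w_neg where "0 \<le> w_neg" "l w_neg < 0"
    using exists_pos_if_pos_part_nonzero[of "\<lambda>x. - l x"] assms(3)
    unfolding neg_part_def by force
  ultimately have G_imp_R: "grothendieck_subspace {x. l x = 0} \<Longrightarrow> riesz_subspace {x. l x = 0}"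
    using kernel_majorizing[OF linear_if_order_bounded[OF assms(1)]]
    by (intro riesz_subspace_if_majorizing_grothendieck_subspace) auto
  have R_imp_homs: "riesz_hom (pos_part l) \<and> riesz_hom (neg_part l)"
    if "riesz_subspace {x. l x = 0}"
    using that assms(1) order_bounded_uminus[OF assms(1)]
      riesz_hom_pos_part_if_riesz_subspace_kernel[of l] riesz_hom_pos_part_if_riesz_subspace_kernel[of "\<lambda>x. - l x"]
    unfolding neg_part_def by simp
  show ?thesis
    using G_imp_R R_imp_homs riesz_subspace_kernel_if_riesz_hom_parts[OF assms(1)]
      grothendieck_subspace_if_riesz_subspace by blast
qed

end
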